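(* Let $(X,\to)$ be a transition system over $A$. For every preorder $R\in\mathit{Pre}(X)$ and $x_1,x_2\in X$: $(x_1,x_2)\in\beta_s(R)$ iff for all $a\in A$ and all $y_1\in\delta_a(x_1)$ there exists $y_2\in\delta_a(x_2)$ with $y_1\mathrel Ry_2$. Moreover, if the transition system is finitely branching, $\beta_s$ is continuous on $(\mathit{Pre}(X),\supseteq)$.
   Context: A transition system over $A$: $(X,\to)$ with $\to\subseteq X\times A\times X$; $\delta_a(x)=\{x'\mid x\xrightarrow{a}x'\}$; finitely branching means $\{(a,x')\mid x\xrightarrow{a}x'\}$ is finite for all $x$. $\mathit{Pre}(X)$ is the set of preorders on $X$, ordered by $\supseteq$; continuity means preserving suprema of well-ordered chains in this order (i.e. intersections of descending chains). $\Diamond_a(S)=\{x\mid\exists x'\in S\colon x\xrightarrow{a}x'\}$. $\alpha_s(\mathcal S)=\{(x_1,x_2)\mid\forall S\in\mathcal S\colon(x_1\in S\Rightarrow x_2\in S)\}$ for $\mathcal S\subseteq\mathcal P(X)$; $\gamma_s(R)=\{S\subseteq X\mid\forall s\in S\colon R[\{s\}]\subseteq S\}$ where $R[\{s\}]=\{y\mid (s,y)\in R\}$; $\mathit{lo}_s(\mathcal S)=\bigcup_{a\in A}\{\Diamond_a(S)\mid S\in\mathrm{cl}^\cap_f(\mathcal S)\}$, with $\mathrm{cl}^\cap_f$ the closure under finite intersections (including the empty intersection $X$); $\beta_s=\alpha_s\circ\mathit{lo}_s\circ\gamma_s$. *)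

theory Defs
  imports Main
begin

(* A transition system over actions 'a with states 'x (X = UNIV :: 'x set),
   given by its transition relation T, where (x, a, x') \<in> T means x -a-> x'. *)

definition delta :: "('x \<times> 'a \<times> 'x) set \<Rightarrow> 'a \<Rightarrow> 'x \<Rightarrow> 'x set" where
  "delta T a x = {x'. (x, a, x') \<in> T}"

definition finitely_branching :: "('x \<times> 'a \<times> 'x) set \<Rightarrow> bool" where
  "finitely_branching T \<longleftrightarrow> (\<forall>x. finite {(a, x'). (x, a, x') \<in> T})"

definition Pre :: "('x \<times> 'x) set set" where
  "Pre = {R. preorder_on UNIV R}"

definition Dia :: "('x \<times> 'a \<times> 'x) set \<Rightarrow> 'a \<Rightarrow> 'x set \<Rightarrow> 'x set" where
  "Dia T a S = {x. \<exists>x'\<in>S. (x, a, x') \<in> T}"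

definition alpha_s :: "'x set set \<Rightarrow> ('x \<times> 'x) set" where
  "alpha_s SS = {(x1, x2). \<forall>S\<in>SS. x1 \<in> S \<longrightarrow> x2 \<in> S}"

definition gamma_s :: "('x \<times> 'x) set \<Rightarrow> 'x set set" where
  "gamma_s R = {S. \<forall>s\<in>S. R `` {s} \<subseteq> S}"

(* closure under finite intersections, including the empty intersection X = UNIV *)
definition cl_fin_inter :: "'x set set \<Rightarrow> 'x set set" where
  "cl_fin_inter SS = {\<Inter> F | F. finite F \<and> F \<subseteq> SS}"

definition lo_s :: "('x \<times> 'a \<times> 'x) set \<Rightarrow> 'x set set \<Rightarrow> 'x set set" where
  "lo_s T SS = (\<Union>a. {Dia T a S | S. S \<in> cl_fin_inter SS})"

definition beta_s :: "('x \<times> 'a \<times> 'x) set \<Rightarrow> ('x \<times> 'x) set \<Rightarrow> ('x \<times> 'x) set" where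
  "beta_s T R = alpha_s (lo_s T (gamma_s R))"

(* A well-ordered chain in (Pre(X), \<supseteq>): a set of preorders totally ordered by
   inclusion in which every nonempty subset has a least element w.r.t. \<supseteq>,
   i.e. a \<subseteq>-greatest element. *)
definition wo_chain_sup :: "('x \<times> 'x) set set \<Rightarrow> bool" where
  "wo_chain_sup C \<longleftrightarrow> C \<subseteq> Pre \<and> (\<forall>R1\<in>C. \<forall>R2\<in>C. R1 \<subseteq> R2 \<or> R2 \<subseteq> R1) \<and>
     (\<forall>D. D \<subseteq> C \<and> D \<noteq> {} \<longrightarrow> (\<exists>R\<in>D. \<forall>R'\<in>D. R' \<subseteq> R))"

(* continuity on (Pre(X), \<supseteq>): preserves suprema (= intersections) of nonempty
   well-ordered chains *)
definition continuous_Pre :: "(('x \<times> 'x) set \<Rightarrow> ('x \<times> 'x) set) \<Rightarrow> bool" where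
  "continuous_Pre f \<longleftrightarrow> (\<forall>C. C \<noteq> {} \<and> wo_chain_sup C \<longrightarrow> f (\<Inter> C) = (\<Inter>R\<in>C. f R))"

end

theory Submission
  imports Defs
begin

(* Since gamma_s R is closed under arbitrary intersections, lo_s only sees the sets
   Dia T a S with S upward closed under R; for a preorder the principal up-sets R``{y}
   are among them, and they detect exactly the simulation condition.  Continuity then
   reduces to the fact that a finite set meeting every member of a descending chain
   meets its intersection, applied to the finite successor sets delta T a x2. *)

definition simulation_functional :: "('x \<times> 'a \<times> 'x) set \<Rightarrow> ('x \<times> 'x) set \<Rightarrow> ('x \<times> 'x) set" where
  "simulation_functional T R =
     {(x1, x2). \<forall>a. \<forall>y1\<in>delta T a x1. \<exists>y2\<in>delta T a x2. (y1, y2) \<in> R}"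

lemma cl_fin_inter_gamma_s: "cl_fin_inter (gamma_s R) = gamma_s R"
proof
  show "cl_fin_inter (gamma_s R) \<subseteq> gamma_s R"
    unfolding cl_fin_inter_def gamma_s_def by blast
  show "gamma_s R \<subseteq> cl_fin_inter (gamma_s R)"
    unfolding cl_fin_inter_def by (force intro: exI[of _ "{S}" for S])
qed

lemma Image_singleton_in_gamma_s: "trans R \<Longrightarrow> R `` {y} \<in> gamma_s R"
  unfolding gamma_s_def trans_def by blast

lemma beta_s_eq_simulation_functional:
  assumes "preorder_on UNIV R"
  shows "beta_s T R = simulation_functional T R"
proof -
  have beta_s_iff: "(x1, x2) \<in> beta_s T R \<longleftrightarrow>
      (\<forall>a. \<forall>S\<in>gamma_s R. x1 \<in> Dia T a S \<longrightarrow> x2 \<in> Dia T a S)" for x1 x2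
    unfolding beta_s_def alpha_s_def lo_s_def cl_fin_inter_gamma_s by blast
  have "beta_s T R \<subseteq> simulation_functional T R"
  proof (rule subrelI)
    fix x1 x2 assume "(x1, x2) \<in> beta_s T R"
    moreover have "R `` {y} \<in> gamma_s R" for y
      using assms unfolding preorder_on_def by (simp add: Image_singleton_in_gamma_s)
    ultimately have Dia_up_set: "x1 \<in> Dia T a (R `` {y}) \<Longrightarrow> x2 \<in> Dia T a (R `` {y})" for a y
      unfolding beta_s_iff by blast
    show "(x1, x2) \<in> simulation_functional T R"
      unfolding simulation_functional_def
    proof (clarify)
      fix a y1 assume "y1 \<in> delta T a x1"
      moreover have "(y1, y1) \<in> R"
        using assms unfolding preorder_on_def refl_on_def by blast
      ultimately have "x1 \<in> Dia T a (R `` {y1})"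
        unfolding Dia_def delta_def by blast
      then show "\<exists>y2\<in>delta T a x2. (y1, y2) \<in> R"
        using Dia_up_set unfolding Dia_def delta_def by blast
    qed
  qed
  moreover have "simulation_functional T R \<subseteq> beta_s T R"
  proof (rule subrelI)
    fix x1 x2 assume "(x1, x2) \<in> simulation_functional T R"
    then show "(x1, x2) \<in> beta_s T R"
      unfolding beta_s_iff simulation_functional_def Dia_def delta_def gamma_s_def by blast
  qed
  ultimately show ?thesis by (rule subset_antisym)
qed

lemma finite_meets_Inter_chain:
  assumes "finite F" "C \<noteq> {}" "chain\<^sub>\<subseteq> C" "\<And>S. S \<in> C \<Longrightarrow> S \<inter> F \<noteq> {}"
  shows "\<Inter>C \<inter> F \<noteq> {}"
  using assms(1,4)
proof (induction F rule: finite_induct)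
  case empty
  then show ?case using \<open>C \<noteq> {}\<close> by blast
next
  case (insert y F)
  show ?case
  proof (cases "y \<in> \<Inter>C")
    case False
    then obtain S0 where "S0 \<in> C" "y \<notin> S0" by blast
    have "S \<inter> F \<noteq> {}" if "S \<in> C" for S
    proof (cases "S \<subseteq> S0")
      case True
      then show ?thesis using \<open>y \<notin> S0\<close> \<open>S \<in> C\<close> insert.prems by blast
    next
      case False
      then have "S0 \<subseteq> S" using \<open>chain\<^sub>\<subseteq> C\<close> \<open>S \<in> C\<close> \<open>S0 \<in> C\<close>
        unfolding chain_subset_def by blast
      then show ?thesis using \<open>y \<notin> S0\<close> \<open>S0 \<in> C\<close> insert.prems by blast
    qed
    then show ?thesis using insert.IH by blast
  qed blast
qed

lemma finite_delta: "finitely_branching T \<Longrightarrow> finite (delta T a x)"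
proof -
  assume "finitely_branching T"
  then have "finite (snd ` {(a, x'). (x, a, x') \<in> T})"
    unfolding finitely_branching_def by blast
  moreover have "delta T a x \<subseteq> snd ` {(a, x'). (x, a, x') \<in> T}"
    unfolding delta_def by force
  ultimately show ?thesis by (rule finite_subset[rotated])
qed

lemma simulation_functional_mono: "R \<subseteq> R' \<Longrightarrow> simulation_functional T R \<subseteq> simulation_functional T R'"
  unfolding simulation_functional_def by blast

lemma simulation_functional_Inter_chain:
  assumes "finitely_branching T" "C \<noteq> {}" "chain\<^sub>\<subseteq> C"
  shows "simulation_functional T (\<Inter>C) = (\<Inter>R\<in>C. simulation_functional T R)"
proof
  show "simulation_functional T (\<Inter>C) \<subseteq> (\<Inter>R\<in>C. simulation_functional T R)"
    by (intro INF_greatest simulation_functional_mono Inter_lower)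
  show "(\<Inter>R\<in>C. simulation_functional T R) \<subseteq> simulation_functional T (\<Inter>C)"
  proof (rule subrelI)
    fix x1 x2 assume sim: "(x1, x2) \<in> (\<Inter>R\<in>C. simulation_functional T R)"
    show "(x1, x2) \<in> simulation_functional T (\<Inter>C)"
      unfolding simulation_functional_def
    proof (clarify)
      fix a y1 assume y1: "y1 \<in> delta T a x1"
      let ?up_sets = "(\<lambda>R. R `` {y1}) ` C"
      have "?up_sets \<noteq> {}"
        using \<open>C \<noteq> {}\<close> by blast
      moreover have "chain\<^sub>\<subseteq> ?up_sets"
        using \<open>chain\<^sub>\<subseteq> C\<close> unfolding chain_subset_def by blast
      moreover have "S \<inter> delta T a x2 \<noteq> {}" if "S \<in> ?up_sets" for S
      proof -
        obtain R where "R \<in> C" "S = R `` {y1}"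
          using \<open>S \<in> ?up_sets\<close> by blast
        moreover obtain y2 where "y2 \<in> delta T a x2" "(y1, y2) \<in> R"
          using sim y1 \<open>R \<in> C\<close> unfolding simulation_functional_def by blast
        ultimately show ?thesis by blast
      qed
      ultimately have "\<Inter>?up_sets \<inter> delta T a x2 \<noteq> {}"
        by (rule finite_meets_Inter_chain[OF finite_delta[OF \<open>finitely_branching T\<close>]])
      then show "\<exists>y2\<in>delta T a x2. (y1, y2) \<in> \<Inter>C"
        by blast
    qed
  qed
qed

lemma Inter_in_Pre: "C \<subseteq> Pre \<Longrightarrow> \<Inter>C \<in> Pre"
  unfolding Pre_def preorder_on_def refl_on_def trans_def by (auto simp: subset_iff)

theorem mainTheorem7:
  fixes T :: "('x \<times> 'a \<times> 'x) set"
  shows "(\<forall>R\<in>Pre. \<forall>x1 x2. (x1, x2) \<in> beta_s T R \<longleftrightarrow>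
            (\<forall>a. \<forall>y1\<in>delta T a x1. \<exists>y2\<in>delta T a x2. (y1, y2) \<in> R))
         \<and> (finitely_branching T \<longrightarrow> continuous_Pre (beta_s T))"
proof (intro conjI impI)
  have beta_s_Pre: "R \<in> Pre \<Longrightarrow> beta_s T R = simulation_functional T R" for R
    unfolding Pre_def by (simp add: beta_s_eq_simulation_functional)
  then show "\<forall>R\<in>Pre. \<forall>x1 x2. (x1, x2) \<in> beta_s T R \<longleftrightarrow>
            (\<forall>a. \<forall>y1\<in>delta T a x1. \<exists>y2\<in>delta T a x2. (y1, y2) \<in> R)"
    by (simp add: simulation_functional_def)
  assume "finitely_branching T"
  show "continuous_Pre (beta_s T)"
    unfolding continuous_Pre_def
  proof (intro allI impI, elim conjE)
    fix C :: "('x \<times> 'x) set set"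
    assume "C \<noteq> {}" "wo_chain_sup C"
    then have "C \<subseteq> Pre" "chain\<^sub>\<subseteq> C"
      unfolding wo_chain_sup_def chain_subset_def by auto
    have "beta_s T (\<Inter>C) = simulation_functional T (\<Inter>C)"
      using \<open>C \<subseteq> Pre\<close> by (intro beta_s_Pre Inter_in_Pre)
    also have "\<dots> = (\<Inter>R\<in>C. simulation_functional T R)"
      using \<open>finitely_branching T\<close> \<open>C \<noteq> {}\<close> \<open>chain\<^sub>\<subseteq> C\<close>
      by (rule simulation_functional_Inter_chain)
    also have "\<dots> = (\<Inter>R\<in>C. beta_s T R)"
      using \<open>C \<subseteq> Pre\<close> beta_s_Pre by auto
    finally show "beta_s T (\<Inter>C) = (\<Inter>R\<in>C. beta_s T R)" .
  qed
qed

end
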